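(* Let $n\ge2$ and $a,b$ be positive integers, $h(j)=aj^n+b$ for $j\ge0$, $h(j)=0$ for $j<0$, $\alpha=a/b$ and $c(h)=\lfloor\alpha\rfloor+1$. Then $\operatorname{hdepth}(h)\le \operatorname{eq}(h)$. Moreover, if $c(h)\le 4$, then $\operatorname{hdepth}(h)=\operatorname{eq}(h)$.
   Context: For a nonzero function $h:\mathbb Z\to\mathbb Z_{\ge 0}$ with $h(j)=0$ for all sufficiently negative $j$, and integers $k\le d$, set $\beta_k^d(h)=\sum_{j\le k}(-1)^{k-j}\binom{d-j}{k-j}h(j)$, and $\operatorname{hdepth}(h)=\max\{d\in\mathbb Z:\ \beta_k^d(h)\ge 0\text{ for all integers }k\le d\}$. For $1\le i\le 2^n-1$ put $m=2^n+1-i$ and $\lambda_i=\dfrac{m^2+m(2^{n+1}-3)+2^{2n}-3\cdot2^n+4}{2m-2}$ (so $\lambda_1<\lambda_2<\dots<\lambda_{2^n-1}$). Define $$\operatorname{eq}(h)=\begin{cases}c(h),&\alpha\in(0,2^{n+1}-1),\\ 2^{n+1},&\alpha\in[2^{n+1}-1,\lambda_1],\\ 2^{n+1}+1-i,&\alpha\in(\lambda_{i-1},\lambda_i]\ \text{ for } 2\le i\le 2^n-1,\\ 2^n+1,&\alpha\in(\lambda_{2^n-1},\infty).\end{cases}$$ *)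

theory Defs
  imports Complex_Main
begin

text \<open>beta_k^d(h) = sum over j <= k of (-1)^(k-j) * binom(d-j, k-j) * h(j).
  Only finitely many j <= k have h j nonzero (h vanishes for sufficiently negative j),
  so we sum over that finite set.\<close>
definition beta :: "(int \<Rightarrow> int) \<Rightarrow> int \<Rightarrow> int \<Rightarrow> int" where
  "beta h d k = (\<Sum>j \<in> {j. j \<le> k \<and> h j \<noteq> 0}.
      (-1) ^ nat (k - j) * int (nat (d - j) choose nat (k - j)) * h j)"

definition hdepth :: "(int \<Rightarrow> int) \<Rightarrow> int" where
  "hdepth h = (GREATEST d::int. \<forall>k\<le>d. beta h d k \<ge> 0)"

definition lam :: "nat \<Rightarrow> nat \<Rightarrow> real" where
  "lam n i = (let m = real (2^n + 1 - i) in
     (m^2 + m * (2^(n+1) - 3) + 2^(2*n) - 3 * 2^n + 4) / (2*m - 2))"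

text \<open>eq(h) as a function of n and alpha = a/b (c(h) = floor alpha + 1).\<close>
definition eqh :: "nat \<Rightarrow> real \<Rightarrow> int" where
  "eqh n \<alpha> =
     (if 0 < \<alpha> \<and> \<alpha> < 2^(n+1) - 1 then \<lfloor>\<alpha>\<rfloor> + 1
      else if 2^(n+1) - 1 \<le> \<alpha> \<and> \<alpha> \<le> lam n 1 then 2^(n+1)
      else if lam n (2^n - 1) < \<alpha> then 2^n + 1
      else 2^(n+1) + 1 - int (THE i. 2 \<le> i \<and> i \<le> 2^n - 1 \<and>
                                   lam n (i - 1) < \<alpha> \<and> \<alpha> \<le> lam n i))"

end

theory Submission
  imports Defs
begin

text \<open>
  Only the coefficients \<open>\<beta>\<^sub>1\<close> and \<open>\<beta>\<^sub>2\<close> are needed for the upper bound. With \<open>N = 2\<^sup>n\<close>,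
  \<open>\<beta>\<^sub>1\<^sup>d \<ge> 0\<close> says \<open>(d - 1) b \<le> a\<close>, i.e. \<open>d \<le> c(h)\<close>, and \<open>\<beta>\<^sub>2\<^sup>d \<ge> 0\<close> says
  \<open>2 a (d - 1 - N) \<le> b ((d - 1)(d - 2) + 2)\<close>. Together they rule out \<open>d > 2N\<close>, and for
  \<open>N + 2 \<le> d\<close> the second one reads \<open>\<alpha> \<le> L(d - 1 - N)\<close> for the curve
  \<open>L(x) = ((x + N)(x + N - 1) + 2) / (2x)\<close>, which is decreasing on \<open>[1, N - 1]\<close> and satisfies
  \<open>\<lambda>\<^sub>i = L(N - i)\<close>. Hence \<open>\<lambda>\<^sub>j < \<alpha>\<close> forces \<open>d \<le> 2N - j\<close>, and locating \<open>\<alpha>\<close> among the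
  \<open>\<lambda>\<^sub>i\<close> yields \<open>d \<le> eq(h)\<close>. If \<open>c(h) \<le> 4\<close>, the at most five coefficients \<open>\<beta>\<^sub>k\<^sup>d\<close> with \<open>d = c(h)\<close>
  are computed explicitly and are all nonnegative, so \<open>hdepth(h) = c(h) = eq(h)\<close>.
\<close>

lemma Greatest_int_le:
  fixes P :: "int \<Rightarrow> bool"
  assumes "P d\<^sub>0" and bound: "\<And>d. P d \<Longrightarrow> d \<le> E"
  shows "(GREATEST d. P d) \<le> E"
proof -
  define S where "S = {d. d\<^sub>0 \<le> d \<and> P d}"
  have "finite S" unfolding S_def using bound by (auto intro: finite_subset[of _ "{d\<^sub>0..E}"])
  moreover have "d\<^sub>0 \<in> S" using assms(1) by (simp add: S_def)
  ultimately have "Max S \<in> S" and Max_ge: "\<And>d. d \<in> S \<Longrightarrow> d \<le> Max S"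
    by (auto intro: Max_in)
  have "(GREATEST d. P d) = Max S"
  proof (rule Greatest_equality)
    show "P (Max S)" using \<open>Max S \<in> S\<close> by (simp add: S_def)
    show "d \<le> Max S" if "P d" for d
      using Max_ge[of d] \<open>Max S \<in> S\<close> that by (cases "d\<^sub>0 \<le> d") (auto simp: S_def)
  qed
  then show ?thesis using \<open>Max S \<in> S\<close> bound by (simp add: S_def)
qed

lemma crossing_index:
  fixes f :: "nat \<Rightarrow> 'a::linorder"
  assumes "i \<le> j" "f i < y" "y \<le> f j"
  obtains k where "i < k" "k \<le> j" "f (k - 1) < y" "y \<le> f k"
proof (rule ccontr)
  note crossing = that
  assume no_crossing: "\<not> thesis"
  have "m \<le> j \<longrightarrow> f m < y" if "i \<le> m" for m
    using that
  proof (induction m rule: dec_induct)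
    case base
    show ?case using assms(2) by simp
  next
    case (step m)
    show ?case
    proof
      assume "Suc m \<le> j"
      with step.IH have "f (Suc m - 1) < y" by simp
      with crossing[of "Suc m"] no_crossing \<open>Suc m \<le> j\<close> step.hyps show "f (Suc m) < y"
        by (meson le_imp_less_Suc not_le)
    qed
  qed
  then show False
    using assms by (meson leD order.refl)
qed

lemma double_power_two_le_power_three: "2 \<le> m \<Longrightarrow> 2 * (2::int)^m \<le> 3^m"
proof (induction m rule: nat_induct_at_least)
  case (Suc m)
  have "(0::int) \<le> 3^m" by simp
  then show ?case using Suc.IH by (simp only: power_Suc)
qed simp

section \<open>The curve through the \<open>\<lambda>\<^sub>i\<close>\<close>

definition lam_curve :: "real \<Rightarrow> real \<Rightarrow> real" where
  "lam_curve N x = ((x + N) * (x + N - 1) + 2) / (2 * x)"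

lemma lam_curve_antimono:
  assumes "0 < x" "x \<le> y" "x * y \<le> N\<^sup>2 - N + 2"
  shows "lam_curve N y \<le> lam_curve N x"
proof -
  have "0 \<le> (y - x) * (N\<^sup>2 - N + 2 - x * y) / (2 * x * y)"
    using assms by (intro divide_nonneg_pos mult_nonneg_nonneg) auto
  also have "\<dots> = lam_curve N x - lam_curve N y"
    using assms by (simp add: lam_curve_def field_simps power2_eq_square)
  finally show ?thesis by simp
qed

lemma lam_eq_lam_curve:
  assumes "i \<le> 2^n"
  shows "lam n i = lam_curve (2^n) (2^n - real i)"
proof -
  have m: "real (2^n + 1 - i) = 2^n + 1 - real i" using assms by (simp add: of_nat_diff)
  have pow: "(2::real)^(n+1) = 2 * 2^n" "(2::real)^(2*n) = 2^n * 2^n"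
    by simp (metis mult_2 power_add)
  show ?thesis
    unfolding lam_def lam_curve_def Let_def m pow by (simp add: algebra_simps power2_eq_square)
qed

lemma lam_mono:
  assumes "1 \<le> i" "i \<le> j" "j \<le> 2^n - 1"
  shows "lam n i \<le> lam n j"
proof -
  have "j + 1 \<le> 2^n" using assms by linarith
  then have "real (j + 1) \<le> real (2^n)" by (simp only: of_nat_le_iff)
  then have j: "real j \<le> 2^n - 1" by simp
  have "(2^n - real j) * (2^n - real i) \<le> (2^n - 1) * (2^n - 1)"
    using assms j by (intro mult_mono) auto
  then have "lam_curve (2^n) (2^n - real i) \<le> lam_curve (2^n) (2^n - real j)"
    using assms j by (intro lam_curve_antimono) (auto simp: power2_eq_square algebra_simps)
  moreover have "i \<le> 2^n" "j \<le> 2^n" using \<open>j + 1 \<le> 2^n\<close> assms(2) by linarith+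
  ultimately show ?thesis by (simp add: lam_eq_lam_curve)
qed

lemma lam_1_gt:
  assumes "1 \<le> n"
  shows "2^(n+1) - 1 < lam n 1"
proof -
  have N: "(2::real) \<le> 2^n"
    using power_increasing[OF assms, of "2::real"] by simp
  have "lam n 1 = lam_curve (2^n) (2^n - 1)"
    using lam_eq_lam_curve[of 1 n] by simp
  also have "\<dots> = 2 * 2^n - 1 + 1 / (2^n - 1)"
    using N by (simp add: lam_curve_def field_simps)
  finally show ?thesis using N by simp
qed

lemma eqh_below: "0 < \<alpha> \<Longrightarrow> \<alpha> < 2^(n+1) - 1 \<Longrightarrow> eqh n \<alpha> = \<lfloor>\<alpha>\<rfloor> + 1"
  by (simp add: eqh_def)

lemma eqh_plateau: "2^(n+1) - 1 \<le> \<alpha> \<Longrightarrow> \<alpha> \<le> lam n 1 \<Longrightarrow> eqh n \<alpha> = 2^(n+1)"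
  by (simp add: eqh_def)

lemma eqh_above:
  assumes "1 \<le> n" "lam n (2^n - 1) < \<alpha>"
  shows "eqh n \<alpha> = 2^n + 1"
proof -
  have "(1::nat) \<le> 2^n - 1"
    using power_increasing[OF assms(1), of "2::nat"] by simp
  then have "lam n 1 < \<alpha>" using lam_mono[of 1 "2^n - 1" n] assms(2) by simp
  with lam_1_gt[OF assms(1)] assms(2) show ?thesis by (auto simp: eqh_def)
qed

lemma eqh_index:
  assumes "1 \<le> n" "2 \<le> i" "i \<le> 2^n - 1" "lam n (i - 1) < \<alpha>" "\<alpha> \<le> lam n i"
  shows "eqh n \<alpha> = 2^(n+1) + 1 - int i"
proof -
  have "lam n 1 \<le> lam n (i - 1)" "lam n i \<le> lam n (2^n - 1)"
    using assms(2,3) by (auto intro: lam_mono)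
  then have cases: "\<not> (0 < \<alpha> \<and> \<alpha> < 2^(n+1) - 1)" "\<not> (2^(n+1) - 1 \<le> \<alpha> \<and> \<alpha> \<le> lam n 1)"
    "\<not> lam n (2^n - 1) < \<alpha>"
    using lam_1_gt[OF assms(1)] assms(4,5) by auto
  have "(THE i. 2 \<le> i \<and> i \<le> 2^n - 1 \<and> lam n (i - 1) < \<alpha> \<and> \<alpha> \<le> lam n i) = i"
  proof (rule the_equality)
    fix k assume k: "2 \<le> k \<and> k \<le> 2^n - 1 \<and> lam n (k - 1) < \<alpha> \<and> \<alpha> \<le> lam n k"
    have False if "k < i"
    proof -
      have "lam n k \<le> lam n (i - 1)" using that k assms(3) by (intro lam_mono) auto
      then show False using k assms(4) by simp
    qed
    moreover have False if "i < k"
    proof -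
      have "lam n i \<le> lam n (k - 1)" using that k assms(2) by (intro lam_mono) auto
      then show False using k assms(5) by simp
    qed
    ultimately show "k = i" using nat_neq_iff by blast
  qed (use assms in auto)
  with cases show ?thesis by (auto simp: eqh_def)
qed

section \<open>Coefficients \<open>\<beta>\<^sub>k\<^sup>d\<close> of small index\<close>

definition admissible_depth :: "(int \<Rightarrow> int) \<Rightarrow> int \<Rightarrow> bool" where
  "admissible_depth h d \<longleftrightarrow> (\<forall>k\<le>d. 0 \<le> beta h d k)"

lemma hdepth_eq_Greatest: "hdepth h = (GREATEST d. admissible_depth h d)"
  by (simp add: hdepth_def admissible_depth_def)

context
  fixes h :: "int \<Rightarrow> int"
  assumes h_neg: "\<And>j. j < 0 \<Longrightarrow> h j = 0"
begin

lemma beta_eq_sum: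
  "beta h d k = (\<Sum>j=0..k. (-1) ^ nat (k - j) * int (nat (d - j) choose nat (k - j)) * h j)"
  unfolding beta_def using h_neg by (intro sum.mono_neutral_left) (auto, metis not_less)

lemma beta_neg: "k < 0 \<Longrightarrow> beta h d k = 0"
  by (simp add: beta_eq_sum)

lemma beta_0: "beta h d 0 = h 0"
  by (simp add: beta_eq_sum)

lemma beta_1: "1 \<le> d \<Longrightarrow> beta h d 1 = h 1 - d * h 0"
proof -
  assume "1 \<le> d"
  moreover have "{0..1::int} = {0, 1}" by auto
  ultimately show ?thesis by (simp add: beta_eq_sum)
qed

lemma beta_2:
  assumes "2 \<le> d"
  shows "2 * beta h d 2 = 2 * h 2 - 2 * (d - 1) * h 1 + d * (d - 1) * h 0"
proof -
  have choose: "2 * int (nat d choose 2) = d * (d - 1)"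
  proof -
    have "even (nat d * (nat d - 1))" by (cases "even (nat d)") auto
    then have "2 * (nat d choose 2) = nat d * (nat d - 1)" by (simp add: choose_two)
    then have "int (2 * (nat d choose 2)) = int (nat d) * (int (nat d) - 1)"
      using assms by (simp add: of_nat_diff)
    then show ?thesis using assms by simp
  qed
  have "h 0 * (2 * int (nat d choose 2)) = h 0 * (d * (d - 1))" by (simp only: choose)
  also have "\<dots> = d * (d * h 0) - d * h 0" by (simp add: algebra_simps)
  finally have choose_h0: "h 0 * (2 * int (nat d choose 2)) = d * (d * h 0) - d * h 0" .
  have "{0..2::int} = {0, 1, 2}" by auto
  with assms choose_h0 show ?thesis by (simp add: beta_eq_sum algebra_simps)
qed

lemma beta_3_3: "beta h 3 3 = h 3 - h 2 + h 1 - h 0"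
proof -
  have "{0..3::int} = {0, 1, 2, 3}" by auto
  then show ?thesis by (simp add: beta_eq_sum eval_nat_numeral)
qed

lemma beta_4_3: "beta h 4 3 = h 3 - 2 * h 2 + 3 * h 1 - 4 * h 0"
proof -
  have "{0..3::int} = {0, 1, 2, 3}" by auto
  then show ?thesis by (simp add: beta_eq_sum eval_nat_numeral)
qed

lemma beta_4_4: "beta h 4 4 = h 4 - h 3 + h 2 - h 1 + h 0"
proof -
  have "{0..4::int} = {0, 1, 2, 3, 4}" by auto
  then show ?thesis by (simp add: beta_eq_sum eval_nat_numeral)
qed

lemma admissible_depth_0: "0 \<le> h 0 \<Longrightarrow> admissible_depth h 0"
  by (auto simp: admissible_depth_def beta_0 beta_neg le_less)

end

section \<open>The Hilbert function \<open>a j\<^sup>n + b\<close>\<close>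

locale power_hfun =
  fixes n a b :: nat and h :: "int \<Rightarrow> int"
  assumes n_ge_2: "2 \<le> n" and a_pos: "0 < a" and b_pos: "0 < b"
    and h_def: "\<And>j. h j = (if 0 \<le> j then int a * j ^ n + int b else 0)"
begin

abbreviation \<alpha> :: real where "\<alpha> \<equiv> real a / real b"

lemma h_neg: "j < 0 \<Longrightarrow> h j = 0"
  by (simp add: h_def)

lemma four_le_two_power: "(4::'a::linordered_semidom) \<le> 2^n"
  using power_increasing[OF n_ge_2, of "2::'a"] by simp

lemma admissible_depth_beta_1:
  assumes "admissible_depth h d" "1 \<le> d"
  shows "(d - 1) * int b \<le> int a"
proof -
  have "0 \<le> beta h d 1" using assms by (simp add: admissible_depth_def)
  then show ?thesis
    using assms(2) n_ge_2 by (simp add: beta_1[OF h_neg] h_def algebra_simps power_0_left)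
qed

lemma admissible_depth_le_floor:
  assumes "admissible_depth h d"
  shows "d \<le> \<lfloor>\<alpha>\<rfloor> + 1"
proof (cases "1 \<le> d")
  case True
  then have "real_of_int ((d - 1) * int b) \<le> real a"
    using admissible_depth_beta_1[OF assms] by (metis of_int_le_iff of_int_of_nat_eq)
  then have "real_of_int (d - 1) \<le> \<alpha>" using b_pos by (simp add: field_simps)
  then have "d - 1 \<le> \<lfloor>\<alpha>\<rfloor>" by (simp only: le_floor_iff)
  then show ?thesis by simp
qed (simp add: add_increasing)

lemma admissible_depth_beta_2:
  assumes "admissible_depth h d" "2 \<le> d"
  shows "2 * int a * (d - 1 - 2^n) \<le> int b * ((d - 1) * (d - 2) + 2)"
proof -
  have "0 \<le> 2 * beta h d 2" using assms by (simp add: admissible_depth_def)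
  then show ?thesis
    using assms(2) n_ge_2 by (simp add: beta_2[OF h_neg] h_def algebra_simps power_0_left)
qed

lemma admissible_depth_le_two_power:
  assumes adm: "admissible_depth h d"
  shows "d \<le> 2^(n+1)"
proof (rule ccontr)
  define N :: int where "N = 2^n"
  define y where "y = d - 1"
  assume "\<not> d \<le> 2^(n+1)"
  then have y: "2 * N \<le> y" by (simp add: y_def N_def)
  have N: "4 \<le> N" by (simp add: N_def four_le_two_power)
  have "y * int b \<le> int a"
    using admissible_depth_beta_1[OF adm] y N by (simp add: y_def)
  then have "2 * (y * int b) * (y - N) \<le> 2 * int a * (y - N)"
    using y N by (intro mult_right_mono) auto
  also have "\<dots> \<le> int b * (y * (y - 1) + 2)"
    using admissible_depth_beta_2[OF adm] y N by (simp add: y_def N_def algebra_simps)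
  finally have "int b * (2 * y * (y - N)) \<le> int b * (y * (y - 1) + 2)"
    by (simp add: algebra_simps)
  then have "2 * y * (y - N) \<le> y * (y - 1) + 2"
    using b_pos by simp
  moreover have "2 * y * (y - N) - (y * (y - 1) + 2) = y * (y - 2 * N + 1) - 2"
    by (simp add: algebra_simps)
  moreover have "y * 1 \<le> y * (y - 2 * N + 1)"
    using y N by (intro mult_left_mono) auto
  ultimately show False using y N by linarith
qed

lemma admissible_depth_le_of_lam_less:
  assumes adm: "admissible_depth h d" and j: "1 \<le> j" "j \<le> 2^n - 1" and lam_less: "lam n j < \<alpha>"
  shows "d \<le> 2^(n+1) - int j"
proof (rule ccontr)
  define N :: real where "N = 2^n"
  define x where "x = real_of_int d - 1 - N"
  assume "\<not> d \<le> 2^(n+1) - int j"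
  then have "real_of_int (2^(n+1) - int j + 1) \<le> real_of_int d" by (simp only: of_int_le_iff)
  then have x_ge: "N - real j \<le> x" by (simp add: x_def N_def)
  have "real (j + 1) \<le> real (2^n)" using j by (simp only: of_nat_le_iff)
  then have j_le: "real j \<le> N - 1" by (simp add: N_def)
  have "real_of_int d \<le> real_of_int (2^(n+1))"
    using admissible_depth_le_two_power[OF adm] by (simp only: of_int_le_iff)
  then have x_le: "x \<le> N - 1" by (simp add: x_def N_def)
  have "real_of_int 2 \<le> real_of_int d" using x_ge j_le by (simp add: x_def)
  txt \<open>\<open>\<beta>\<^sub>2 \<ge> 0\<close> bounds \<open>\<alpha>\<close> by the curve at \<open>x \<ge> N - j\<close>, where its value is \<open>\<lambda>\<^sub>j\<close>.\<close>
  then have "real_of_int (2 * int a * (d - 1 - 2^n)) \<le> real_of_int (int b * ((d - 1) * (d - 2) + 2))"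
    using admissible_depth_beta_2[OF adm] by (simp only: of_int_le_iff)
  then have "2 * real a * x \<le> real b * ((x + N) * (x + N - 1) + 2)"
    by (simp add: x_def N_def algebra_simps)
  then have "\<alpha> \<le> lam_curve N x"
    using x_ge j_le b_pos by (simp add: lam_curve_def field_simps)
  also have "\<dots> \<le> lam_curve N (N - real j)"
  proof (rule lam_curve_antimono)
    have "(N - real j) * x \<le> (N - 1) * (N - 1)"
      using j x_ge x_le j_le by (intro mult_mono) auto
    moreover have "(N - 1) * (N - 1) \<le> N\<^sup>2 - N + 2"
      using j_le by (simp add: power2_eq_square algebra_simps)
    ultimately show "(N - real j) * x \<le> N\<^sup>2 - N + 2" by linarith
  qed (use x_ge j_le in auto)
  also have "\<dots> = lam n j"
    using j by (simp add: N_def lam_eq_lam_curve)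
  finally show False using lam_less by simp
qed

lemma admissible_depth_le_eqh:
  assumes adm: "admissible_depth h d"
  shows "d \<le> eqh n \<alpha>"
proof -
  have n: "1 \<le> n" using n_ge_2 by simp
  have top: "1 \<le> (2::nat)^n - 1" "int (2^n - 1) = 2^n - 1"
    using four_le_two_power[where 'a=nat] by (simp_all add: of_nat_diff)
  consider "\<alpha> < 2^(n+1) - 1" | "2^(n+1) - 1 \<le> \<alpha>" "\<alpha> \<le> lam n 1"
    | "lam n (2^n - 1) < \<alpha>" | "lam n 1 < \<alpha>" "\<alpha> \<le> lam n (2^n - 1)"
    by linarith
  then show ?thesis
  proof cases
    case 1
    then show ?thesis
      using a_pos b_pos eqh_below admissible_depth_le_floor[OF adm] by simp
  next
    case 2
    then show ?thesis using eqh_plateau admissible_depth_le_two_power[OF adm] by simp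
  next
    case 3
    then show ?thesis
      using eqh_above[OF n] admissible_depth_le_of_lam_less[OF adm top(1) order.refl] top by simp
  next
    case 4
    then obtain i where i: "1 < i" "i \<le> 2^n - 1" "lam n (i - 1) < \<alpha>" "\<alpha> \<le> lam n i"
      using crossing_index[OF top(1), of "lam n" \<alpha>] by blast
    then have "d \<le> 2^(n+1) - int (i - 1)"
      by (intro admissible_depth_le_of_lam_less[OF adm]) auto
    then show ?thesis using i eqh_index[OF n, of i \<alpha>] by (simp add: of_nat_diff)
  qed
qed

lemma admissible_depth_small:
  assumes c: "1 \<le> c" "c \<le> 4" and ab: "(c - 1) * int b \<le> int a"
  shows "admissible_depth h c"
  unfolding admissible_depth_def
proof (intro allI impI)
  fix k assume "k \<le> c"
  have pow2: "4 \<le> (2::int)^n" by (rule four_le_two_power)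
  have pow3: "2 * 2^n \<le> (3::int)^n" by (rule double_power_two_le_power_three[OF n_ge_2])
  have h: "h 0 = int b" "h 1 = int a + int b" "h 2 = int a * 2^n + int b"
    "h 3 = int a * 3^n + int b" "h 4 = int a * 4^n + int b"
    using n_ge_2 by (simp_all add: h_def)
  consider "k < 0" | "k = 0" | "k = 1" | "k = 2" | "k = 3" "c = 3" | "k = 3" "c = 4" | "k = 4" "c = 4"
    using \<open>k \<le> c\<close> c by linarith
  then show "0 \<le> beta h c k"
  proof cases
    case 1
    then show ?thesis by (simp add: beta_neg[OF h_neg])
  next
    case 2
    then show ?thesis by (simp add: beta_0[OF h_neg] h)
  next
    case 3
    then show ?thesis using c ab by (simp add: beta_1[OF h_neg] h algebra_simps)
  next
    case 4
    then have "c = 2 \<or> c = 3 \<or> c = 4" using \<open>k \<le> c\<close> c by linarith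
    then have "2 * beta h c 2 = 2 * int a * (2^n - c + 1) + int b * (c * (c - 3) + 4)"
      and "0 \<le> c * (c - 3) + 4"
      by (auto simp: beta_2[OF h_neg] h algebra_simps)
    moreover have "0 \<le> 2 * int a * (2^n - c + 1)" using pow2 c by simp
    moreover have "0 \<le> int b * (c * (c - 3) + 4)" using calculation(2) by simp
    ultimately show ?thesis unfolding 4 by linarith
  next
    case 5
    have "int a * 2^n \<le> int a * 3^n" by (intro mult_left_mono power_mono) auto
    then show ?thesis using 5 by (simp add: beta_3_3[OF h_neg] h algebra_simps)
  next
    case 6
    have "int a * (2 * 2^n) \<le> int a * 3^n" using pow3 by (intro mult_left_mono) auto
    then show ?thesis using 6 ab by (simp add: beta_4_3[OF h_neg] h algebra_simps)
  next
    case 7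
    have "int a * 3^n \<le> int a * 4^n" "int a * 1 \<le> int a * 2^n"
      using pow2 by (intro mult_left_mono power_mono; simp)+
    then show ?thesis using 7 by (simp add: beta_4_4[OF h_neg] h algebra_simps)
  qed
qed

lemma hdepth_le_eqh: "hdepth h \<le> eqh n \<alpha>"
proof -
  have "admissible_depth h 0"
    by (rule admissible_depth_0) (simp_all add: h_def)
  then show ?thesis
    unfolding hdepth_eq_Greatest by (rule Greatest_int_le) (rule admissible_depth_le_eqh)
qed

lemma hdepth_eq_floor_succ:
  assumes "\<lfloor>\<alpha>\<rfloor> + 1 \<le> 4"
  shows "hdepth h = \<lfloor>\<alpha>\<rfloor> + 1"
proof -
  have "real_of_int (\<lfloor>\<alpha>\<rfloor> * int b) \<le> real a"
    using of_int_floor_le[of \<alpha>] b_pos by (simp add: le_divide_eq)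
  then have "\<lfloor>\<alpha>\<rfloor> * int b \<le> int a" by linarith
  then have "admissible_depth h (\<lfloor>\<alpha>\<rfloor> + 1)"
    using assms by (intro admissible_depth_small) simp_all
  then show ?thesis
    unfolding hdepth_eq_Greatest by (rule Greatest_equality) (rule admissible_depth_le_floor)
qed

lemma eqh_eq_floor_succ:
  assumes "\<lfloor>\<alpha>\<rfloor> + 1 \<le> 4"
  shows "eqh n \<alpha> = \<lfloor>\<alpha>\<rfloor> + 1"
proof (rule eqh_below)
  have "\<alpha> < 4" using assms floor_less_iff by fastforce
  moreover have "(8::real) \<le> 2^(n+1)"
    using power_increasing[of 3 "n+1" "2::real"] n_ge_2 by simp
  ultimately show "\<alpha> < 2^(n+1) - 1" by simp
qed (simp add: a_pos b_pos)

end

theorem theorem3p9: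
  fixes n a b :: nat and h :: "int \<Rightarrow> int"
  assumes "n \<ge> 2" and "a > 0" and "b > 0"
    and "\<And>j. h j = (if j \<ge> 0 then int a * j ^ n + int b else 0)"
  shows "hdepth h \<le> eqh n (real a / real b)
     \<and> (\<lfloor>real a / real b\<rfloor> + 1 \<le> 4 \<longrightarrow> hdepth h = eqh n (real a / real b))"
proof -
  interpret power_hfun n a b h
    using assms by unfold_locales
  show ?thesis
    using hdepth_le_eqh hdepth_eq_floor_succ eqh_eq_floor_succ by simp
qed

end
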